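(* Let $S=(X,X_0,X_S,U,\rightarrow,Y,H)$ be a finite metric system with metric $\mathbf{d}$ on $Y$, let $\delta\geq 0$, and let $S_I=(X_I,X_{I0},U,\rightarrow_I)$ be its $\delta$-approximate initial-state estimator. Then $S$ is $\delta$-approximate initial-state opaque if and only if for all $(x,q)\in X_I$: $x\in X_0\cap X_S$ implies $q\cap X_0\not\subseteq X_S$.
   Context: A system is a tuple $S=(X,X_0,X_S,U,\rightarrow,Y,H)$ with state set $X$, initial states $X_0\subseteq X$, secret states $X_S\subseteq X$, inputs $U$, transition relation $\rightarrow\subseteq X\times U\times X$ (write $x\xrightarrow{u}x'$), outputs $Y$ and output map $H:X\to Y$; it is metric if $Y$ has a metric $\mathbf{d}$, and finite if $X$ and $U$ are finite. A finite run is $x_0\xrightarrow{u_1}x_1\cdots\xrightarrow{u_n}x_n$ with each step a transition and $x_0\in X_0$ (when so stated). $S$ is $\delta$-approximate initial-state opaque if for every $x_0\in X_0\cap X_S$ and every finite run $x_0\xrightarrow{u_1}x_1\cdots\xrightarrow{u_n}x_n$ there exist $x_0'\in X_0\setminus X_S$ and a finite run $x_0'\xrightarrow{u_1'}x_1'\cdots\xrightarrow{u_n'}x_n'$ (inputs arbitrary) with $\max_{0\le i\le n}\mathbf{d}(H(x_i),H(x_i'))\leq\delta$. With $\mathbf{Pre}_u(x)=\{x'':x''\xrightarrow{u}x\}$ and $\mathbf{Pre}_u(q)=\bigcup_{x\in q}\mathbf{Pre}_u(x)$, the $\delta$-approximate initial-state estimator is $S_I=(X_I,X_{I0},U,\rightarrow_I)$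 with $X_{I0}=\{(x,q)\in X\times 2^X: q=\{x'\in X:\mathbf{d}(H(x),H(x'))\leq\delta\}\}$, and $(x,q)\xrightarrow{u}_I(x',q')$ iff $(x',u,x)\in\rightarrow$ and $q'=\bigcup_{\hat u\in U}\mathbf{Pre}_{\hat u}(q)\cap\{x''\in X:\mathbf{d}(H(x'),H(x''))\leq\delta\}$; $X_I$ is the set of states reachable from $X_{I0}$. *)

theory Defs
  imports Main "HOL-Analysis.Analysis"
begin

text \<open>A system S = (X, X0, XS, U, T, Y, H): states X, initial states X0, secret states XS,
  inputs U, transition relation T (triples (x,u,x') meaning x --u--> x'), output map H.
  The output set Y is the (metric) type 'y with metric dist.\<close>

definition finite_metric_system ::
  "'x set \<Rightarrow> 'x set \<Rightarrow> 'x set \<Rightarrow> 'u set \<Rightarrow> ('x \<times> 'u \<times> 'x) set \<Rightarrow> ('x \<Rightarrow> 'y::metric_space) \<Rightarrow> bool" where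
  "finite_metric_system X X0 XS U T H \<longleftrightarrow>
     finite X \<and> finite U \<and> X0 \<subseteq> X \<and> XS \<subseteq> X \<and> T \<subseteq> X \<times> U \<times> X"

text \<open>A finite run of length n: states xs 0, ..., xs n and inputs us 1, ..., us n with
  xs (i) --us (i+1)--> xs (i+1).\<close>
definition is_run :: "('x \<times> 'u \<times> 'x) set \<Rightarrow> nat \<Rightarrow> (nat \<Rightarrow> 'x) \<Rightarrow> (nat \<Rightarrow> 'u) \<Rightarrow> bool" where
  "is_run T n xs us \<longleftrightarrow> (\<forall>i<n. (xs i, us (Suc i), xs (Suc i)) \<in> T)"

definition approx_init_state_opaque ::
  "'x set \<Rightarrow> 'x set \<Rightarrow> 'x set \<Rightarrow> 'u set \<Rightarrow> ('x \<times> 'u \<times> 'x) set \<Rightarrow> ('x \<Rightarrow> 'y::metric_space) \<Rightarrow> real \<Rightarrow> bool" where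
  "approx_init_state_opaque X X0 XS U T H \<delta> \<longleftrightarrow>
     (\<forall>n xs us. xs 0 \<in> X0 \<inter> XS \<and> is_run T n xs us \<longrightarrow>
        (\<exists>xs' us'. xs' 0 \<in> X0 - XS \<and> is_run T n xs' us' \<and>
           (\<forall>i\<le>n. dist (H (xs i)) (H (xs' i)) \<le> \<delta>)))"

definition Pre :: "('x \<times> 'u \<times> 'x) set \<Rightarrow> 'u \<Rightarrow> 'x set \<Rightarrow> 'x set" where
  "Pre T u q = {x''. \<exists>x\<in>q. (x'', u, x) \<in> T}"

definition nbhd :: "'x set \<Rightarrow> ('x \<Rightarrow> 'y::metric_space) \<Rightarrow> real \<Rightarrow> 'x \<Rightarrow> 'x set" where
  "nbhd X H \<delta> x = {x'' \<in> X. dist (H x) (H x'') \<le> \<delta>}"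

definition est_init :: "'x set \<Rightarrow> ('x \<Rightarrow> 'y::metric_space) \<Rightarrow> real \<Rightarrow> ('x \<times> 'x set) set" where
  "est_init X H \<delta> = {(x, q). x \<in> X \<and> q = nbhd X H \<delta> x}"

definition est_trans ::
  "'x set \<Rightarrow> 'u set \<Rightarrow> ('x \<times> 'u \<times> 'x) set \<Rightarrow> ('x \<Rightarrow> 'y::metric_space) \<Rightarrow> real
   \<Rightarrow> ('x \<times> 'x set) \<Rightarrow> 'u \<Rightarrow> ('x \<times> 'x set) \<Rightarrow> bool" where
  "est_trans X U T H \<delta> s u s' \<longleftrightarrow>
     (case s of (x, q) \<Rightarrow> case s' of (x', q') \<Rightarrow>
        (x', u, x) \<in> T \<and> q' = (\<Union>u'\<in>U. Pre T u' q) \<inter> nbhd X H \<delta> x')"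

inductive_set est_reach ::
  "'x set \<Rightarrow> 'u set \<Rightarrow> ('x \<times> 'u \<times> 'x) set \<Rightarrow> ('x \<Rightarrow> 'y::metric_space) \<Rightarrow> real \<Rightarrow> ('x \<times> 'x set) set"
  for X U T H \<delta> where
  init: "s \<in> est_init X H \<delta> \<Longrightarrow> s \<in> est_reach X U T H \<delta>"
| step: "s \<in> est_reach X U T H \<delta> \<Longrightarrow> est_trans X U T H \<delta> s u s' \<Longrightarrow> s' \<in> est_reach X U T H \<delta>"

end

theory Submission
  imports Defs
begin

text \<open>The estimator reads runs backwards: its transition (x, q) to (x', q') follows a
  transition x' to x of S. Hence the states reachable in n steps are exactly the pairs
  (xs 0, q) where xs is a run of length n and q is the set of start states of runs that stay
  \<open>\<delta>\<close>-close to xs in output for all n steps; the recursion for q is the estimator's update.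
  Opacity asks that every run from a secret initial state has such a companion starting in a
  non-secret initial state, i.e. that q meets X0 - XS.\<close>

lemma is_run_Suc_iff:
  "is_run T (Suc n) xs us \<longleftrightarrow>
     (xs 0, us 1, xs 1) \<in> T \<and> is_run T n (\<lambda>i. xs (Suc i)) (\<lambda>i. us (Suc i))"
  unfolding is_run_def by (auto simp: All_less_Suc2)

lemma is_run_case_nat:
  assumes "(x, u, xs 0) \<in> T" and "is_run T n xs us"
  shows "\<exists>us'. is_run T (Suc n) (case_nat x xs) us'"
proof
  show "is_run T (Suc n) (case_nat x xs) (case_nat u (case_nat u (\<lambda>i. us (Suc i))))"
    using assms by (auto simp: is_run_Suc_iff is_run_def split: nat.split)
qed

lemma is_run_in_states:
  assumes "T \<subseteq> X \<times> U \<times> X" and "is_run T n xs us" and "xs 0 \<in> X" and "i \<le> n"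
  shows "xs i \<in> X"
proof (cases i)
  case (Suc j)
  with assms have "(xs j, us (Suc j), xs (Suc j)) \<in> T" unfolding is_run_def by simp
  with assms(1) Suc show ?thesis by auto
qed (use assms in simp)

definition close_run_starts ::
  "'x set \<Rightarrow> ('x \<times> 'u \<times> 'x) set \<Rightarrow> ('x \<Rightarrow> 'y::metric_space) \<Rightarrow> real \<Rightarrow> nat \<Rightarrow> (nat \<Rightarrow> 'x) \<Rightarrow> 'x set"
where
  "close_run_starts X T H \<delta> n xs = {ys 0 | ys. (\<exists>vs. is_run T n ys vs) \<and>
      (\<forall>i\<le>n. ys i \<in> X \<and> dist (H (xs i)) (H (ys i)) \<le> \<delta>)}"

lemma close_run_starts_0: "close_run_starts X T H \<delta> 0 xs = nbhd X H \<delta> (xs 0)"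
  unfolding close_run_starts_def nbhd_def is_run_def
  by (auto intro!: exI[of _ "\<lambda>_. _"])

lemma close_run_starts_Suc:
  assumes T: "T \<subseteq> X \<times> U \<times> X"
  shows "close_run_starts X T H \<delta> (Suc n) xs =
     (\<Union>u\<in>U. Pre T u (close_run_starts X T H \<delta> n (\<lambda>i. xs (Suc i)))) \<inter> nbhd X H \<delta> (xs 0)"
    (is "?lhs = ?rhs")
proof (intro equalityI subsetI)
  fix y assume "y \<in> ?lhs"
  then obtain ys vs where y: "y = ys 0" and run: "is_run T (Suc n) ys vs"
    and close: "\<forall>i\<le>Suc n. ys i \<in> X \<and> dist (H (xs i)) (H (ys i)) \<le> \<delta>"
    unfolding close_run_starts_def by blast
  have step: "(ys 0, vs 1, ys 1) \<in> T"
    and tail: "is_run T n (\<lambda>i. ys (Suc i)) (\<lambda>i. vs (Suc i))"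
    using run by (simp_all add: is_run_Suc_iff)
  have "ys 1 \<in> close_run_starts X T H \<delta> n (\<lambda>i. xs (Suc i))"
    unfolding close_run_starts_def using tail close by fastforce
  with step T y close show "y \<in> ?rhs" by (auto simp: Pre_def nbhd_def)
next
  fix y assume "y \<in> ?rhs"
  then obtain u ys vs where step: "(y, u, ys 0) \<in> T" and run: "is_run T n ys vs"
    and close: "\<forall>i\<le>n. ys i \<in> X \<and> dist (H (xs (Suc i))) (H (ys i)) \<le> \<delta>"
    and y: "y \<in> nbhd X H \<delta> (xs 0)"
    unfolding Pre_def close_run_starts_def by blast
  obtain vs' where "is_run T (Suc n) (case_nat y ys) vs'"
    using is_run_case_nat[OF step run] by blast
  moreover have "\<forall>i\<le>Suc n. case_nat y ys i \<in> X \<and> dist (H (xs i)) (H (case_nat y ys i)) \<le> \<delta>"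
    using close y by (auto simp: nbhd_def split: nat.split)
  ultimately show "y \<in> ?lhs"
    unfolding close_run_starts_def by (intro CollectI exI[of _ "case_nat y ys"]) auto
qed

lemma est_reach_imp_run:
  assumes T: "T \<subseteq> X \<times> U \<times> X" and "s \<in> est_reach X U T H \<delta>"
  shows "\<exists>n xs us. is_run T n xs us \<and> (\<forall>i\<le>n. xs i \<in> X) \<and>
    s = (xs 0, close_run_starts X T H \<delta> n xs)"
  using assms(2)
proof (induction rule: est_reach.induct)
  case (init s)
  then obtain x where x: "x \<in> X" and s: "s = (x, nbhd X H \<delta> x)"
    unfolding est_init_def by blast
  have "is_run T 0 (\<lambda>_. x) us" for us
    unfolding is_run_def by simp
  with x s show ?case
    by (intro exI[of _ 0] exI[of _ "\<lambda>_. x"]) (simp add: close_run_starts_0)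
next
  case (step s u s')
  then obtain n xs us where run: "is_run T n xs us" and in_X: "\<forall>i\<le>n. xs i \<in> X"
    and s: "s = (xs 0, close_run_starts X T H \<delta> n xs)" by blast
  obtain x' q' where s': "s' = (x', q')" by (cases s')
  have trans: "(x', u, xs 0) \<in> T"
    and q': "q' = (\<Union>u'\<in>U. Pre T u' (close_run_starts X T H \<delta> n xs)) \<inter> nbhd X H \<delta> x'"
    using step.hyps(2) by (simp_all add: est_trans_def s s')
  obtain us' where run': "is_run T (Suc n) (case_nat x' xs) us'"
    using is_run_case_nat[OF trans run] by blast
  have "\<forall>i\<le>Suc n. case_nat x' xs i \<in> X"
    using in_X trans T by (auto split: nat.split)
  moreover have "s' = (case_nat x' xs 0, close_run_starts X T H \<delta> (Suc n) (case_nat x' xs))"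
    using s' q' by (simp add: close_run_starts_Suc[OF T])
  ultimately show ?case
    using run' by (intro exI[of _ "Suc n"] exI[of _ "case_nat x' xs"] exI[of _ us']) simp
qed

lemma run_imp_est_reach:
  assumes T: "T \<subseteq> X \<times> U \<times> X" and "is_run T n xs us" and "\<forall>i\<le>n. xs i \<in> X"
  shows "(xs 0, close_run_starts X T H \<delta> n xs) \<in> est_reach X U T H \<delta>"
  using assms(2,3)
proof (induction n arbitrary: xs us)
  case 0
  then show ?case by (intro est_reach.init) (simp add: est_init_def close_run_starts_0)
next
  case (Suc n)
  have trans: "(xs 0, us 1, xs 1) \<in> T"
    and tail: "is_run T n (\<lambda>i. xs (Suc i)) (\<lambda>i. us (Suc i))"
    using Suc.prems(1) by (simp_all add: is_run_Suc_iff)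
  have "\<forall>i\<le>n. xs (Suc i) \<in> X"
    using Suc.prems(2) by simp
  with tail have "(xs 1, close_run_starts X T H \<delta> n (\<lambda>i. xs (Suc i))) \<in> est_reach X U T H \<delta>"
    using Suc.IH by fastforce
  moreover have "est_trans X U T H \<delta> (xs 1, close_run_starts X T H \<delta> n (\<lambda>i. xs (Suc i))) (us 1)
      (xs 0, close_run_starts X T H \<delta> (Suc n) xs)"
    using trans by (simp add: est_trans_def close_run_starts_Suc[OF T])
  ultimately show ?case by (rule est_reach.step)
qed

lemma Ball_est_reach_iff:
  assumes T: "T \<subseteq> X \<times> U \<times> X"
  shows "(\<forall>(x, q) \<in> est_reach X U T H \<delta>. P x q) \<longleftrightarrow>
    (\<forall>n xs us. is_run T n xs us \<and> (\<forall>i\<le>n. xs i \<in> X) \<longrightarrow> P (xs 0) (close_run_starts X T H \<delta> n xs))"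
proof (intro iffI allI impI ballI)
  fix n xs us
  assume "\<forall>(x, q) \<in> est_reach X U T H \<delta>. P x q" and "is_run T n xs us \<and> (\<forall>i\<le>n. xs i \<in> X)"
  with run_imp_est_reach[OF T] show "P (xs 0) (close_run_starts X T H \<delta> n xs)" by fastforce
next
  fix s assume all_runs: "\<forall>n xs us. is_run T n xs us \<and> (\<forall>i\<le>n. xs i \<in> X) \<longrightarrow>
      P (xs 0) (close_run_starts X T H \<delta> n xs)"
    and "s \<in> est_reach X U T H \<delta>"
  then obtain n xs us where "is_run T n xs us" "\<forall>i\<le>n. xs i \<in> X"
    and s: "s = (xs 0, close_run_starts X T H \<delta> n xs)"
    using est_reach_imp_run[OF T] by blast
  with all_runs show "case s of (x, q) \<Rightarrow> P x q" by blast
qed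

lemma close_run_starts_meets_iff:
  assumes T: "T \<subseteq> X \<times> U \<times> X" and X0: "X0 \<subseteq> X"
  shows "\<not> close_run_starts X T H \<delta> n xs \<inter> X0 \<subseteq> XS \<longleftrightarrow>
    (\<exists>xs' us'. xs' 0 \<in> X0 - XS \<and> is_run T n xs' us' \<and> (\<forall>i\<le>n. dist (H (xs i)) (H (xs' i)) \<le> \<delta>))"
proof
  assume "\<not> close_run_starts X T H \<delta> n xs \<inter> X0 \<subseteq> XS"
  then show "\<exists>xs' us'. xs' 0 \<in> X0 - XS \<and> is_run T n xs' us' \<and>
      (\<forall>i\<le>n. dist (H (xs i)) (H (xs' i)) \<le> \<delta>)"
    unfolding close_run_starts_def by blast
next
  assume "\<exists>xs' us'. xs' 0 \<in> X0 - XS \<and> is_run T n xs' us' \<and>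
      (\<forall>i\<le>n. dist (H (xs i)) (H (xs' i)) \<le> \<delta>)"
  then obtain xs' us' where start: "xs' 0 \<in> X0 - XS" and run: "is_run T n xs' us'"
    and close: "\<forall>i\<le>n. dist (H (xs i)) (H (xs' i)) \<le> \<delta>" by blast
  have "\<forall>i\<le>n. xs' i \<in> X"
    using is_run_in_states[OF T run] start X0 by blast
  with run close have "xs' 0 \<in> close_run_starts X T H \<delta> n xs"
    unfolding close_run_starts_def by blast
  with start show "\<not> close_run_starts X T H \<delta> n xs \<inter> X0 \<subseteq> XS" by blast
qed

theorem mainTheorem2:
  fixes X X0 XS :: "'x set" and U :: "'u set" and T :: "('x \<times> 'u \<times> 'x) set"
    and H :: "'x \<Rightarrow> 'y::metric_space" and \<delta> :: real
  assumes "finite_metric_system X X0 XS U T H"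
    and "\<delta> \<ge> 0"
  shows "approx_init_state_opaque X X0 XS U T H \<delta> \<longleftrightarrow>
    (\<forall>(x, q) \<in> est_reach X U T H \<delta>. x \<in> X0 \<inter> XS \<longrightarrow> \<not> (q \<inter> X0 \<subseteq> XS))"
proof -
  have T: "T \<subseteq> X \<times> U \<times> X" and X0: "X0 \<subseteq> X"
    using assms(1) unfolding finite_metric_system_def by auto
  have runs_in_X: "\<forall>i\<le>n. xs i \<in> X" if "is_run T n xs us" and "xs 0 \<in> X0" for n xs us
    using is_run_in_states[OF T that(1)] that(2) X0 by blast
  show ?thesis
    unfolding approx_init_state_opaque_def Ball_est_reach_iff[OF T] close_run_starts_meets_iff[OF T X0]
    using runs_in_X by blast
qed

end
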